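(* Let $|\cdot|$ be a norm on $\mathbb{R}^d$ with constants $c_1,c_2\in(0,\infty)$ such that $c_1\|x\|\le|x|\le c_2\|x\|$ for all $x$. Let $k\in\mathbb{N}$, $\eta\colon\mathbb{R}^d\to\mathbb{R}^k$, $\mu\in\mathbb{R}^k$, $A\colon\mathbb{R}^d\to\mathbb{R}$, and let $\rho\colon\mathbb{R}^d\to(0,\infty)$ be proportional to $x\mapsto\exp(\eta(x)^T\mu-A(x))$. Assume there exist an increasing function $\varphi\colon[0,\infty)\to\mathbb{R}$ and a point $x_0\in\mathbb{R}^d$ with $\eta(x)^T\mu-A(x)=-\varphi(|x-x_0|)$ for all $x\in\mathbb{R}^d$ (equivalently, $\rho$ is proportional to $x\mapsto\exp(-\varphi(|x-x_0|))$). Then: (i) $\rho$ is bounded away from $0$ and from $\infty$ on every compact subset of $\mathbb{R}^d$; (ii) with $R=4\tfrac{c_2}{c_1}\|x_0\|$ and $\alpha=\tfrac{c_1}{2c_2}$, one has $B_{\alpha\|x\|}(0)\subseteq G_{\rho(x)}$ for all $x$ with $\|x\|>R$.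
   Context: $\|\cdot\|$ is the Euclidean norm, $B_r(y)=\{z\in\mathbb{R}^d:\|z-y\|\le r\}$, and $G_t=\{y\in\mathbb{R}^d:\rho(y)\ge t\}$ for $t\ge0$. *)

theory Defs
  imports "HOL-Analysis.Analysis"
begin

definition superlevel :: "('a \<Rightarrow> real) \<Rightarrow> real \<Rightarrow> 'a set" where
  "superlevel \<rho> t = {y. \<rho> y \<ge> t}"

definition is_norm_fun :: "('a::real_vector \<Rightarrow> real) \<Rightarrow> bool" where
  "is_norm_fun N \<longleftrightarrow> (\<forall>x. N x \<ge> 0) \<and> (\<forall>x. N x = 0 \<longleftrightarrow> x = 0)
     \<and> (\<forall>x y. N (x + y) \<le> N x + N y) \<and> (\<forall>c x. N (c *\<^sub>R x) = \<bar>c\<bar> * N x)"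

end

theory Submission
  imports Defs
begin

text \<open>The density is \<open>Z * exp (- \<phi> (N (x - x0)))\<close> with \<open>\<phi>\<close> nondecreasing, so it only grows as
  the \<open>N\<close>-distance to \<open>x0\<close> shrinks. On a compact set that distance is bounded, which bounds the
  density below; it is bounded above by its value at \<open>x0\<close>. For (ii) one checks, using only the
  norm equivalence, that every \<open>y\<close> in the ball of radius \<open>c1 / (2 * c2) * norm x\<close> is
  \<open>N\<close>-closer to \<open>x0\<close> than \<open>x\<close> is, once \<open>norm x\<close> dominates \<open>4 * c2 / c1 * norm x0\<close>.\<close>

lemma exp_neg_mono_on_le:
  fixes \<phi> :: "real \<Rightarrow> real"
  assumes "mono_on {0..} \<phi>" "0 \<le> s" "s \<le> t"
  shows "exp (- \<phi> t) \<le> exp (- \<phi> s)"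
proof -
  have "\<phi> s \<le> \<phi> t"
    using assms(2,3) by (intro mono_onD[OF assms(1)]) auto
  then show ?thesis by simp
qed

lemma radial_density_bounded_on_bounded:
  fixes N :: "'a::real_normed_vector \<Rightarrow> real" and \<phi> :: "real \<Rightarrow> real"
  assumes \<phi>_mono: "mono_on {0..} \<phi>"
    and N_nonneg: "\<forall>x. 0 \<le> N x" and N_le: "\<forall>x. N x \<le> c2 * norm x" and "c2 \<ge> 0"
    and "bounded K" and "Z > 0"
  shows "\<exists>a b. 0 < a \<and> (\<forall>x\<in>K. a \<le> Z * exp (- \<phi> (N (x - x0)))
                                \<and> Z * exp (- \<phi> (N (x - x0))) \<le> b)"
proof -
  obtain M where M: "\<forall>x\<in>K. norm x \<le> M"
    using \<open>bounded K\<close> bounded_iff by metis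
  have N_bound: "N (x - x0) \<le> c2 * (M + norm x0)" if "x \<in> K" for x
  proof -
    have "N (x - x0) \<le> c2 * norm (x - x0)" using N_le by blast
    also have "\<dots> \<le> c2 * (M + norm x0)"
      using M that \<open>c2 \<ge> 0\<close> norm_triangle_ineq4[of x x0] by (intro mult_left_mono) auto
    finally show ?thesis .
  qed
  have "Z * exp (- \<phi> (c2 * (M + norm x0))) \<le> Z * exp (- \<phi> (N (x - x0)))
        \<and> Z * exp (- \<phi> (N (x - x0))) \<le> Z * exp (- \<phi> 0)" if "x \<in> K" for x
  proof -
    have "exp (- \<phi> (c2 * (M + norm x0))) \<le> exp (- \<phi> (N (x - x0)))"
      using N_nonneg N_bound[OF that] by (intro exp_neg_mono_on_le[OF \<phi>_mono]) auto
    moreover have "exp (- \<phi> (N (x - x0))) \<le> exp (- \<phi> 0)"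
      using N_nonneg by (intro exp_neg_mono_on_le[OF \<phi>_mono]) auto
    ultimately show ?thesis
      using \<open>Z > 0\<close> by (intro conjI mult_left_mono) auto
  qed
  moreover have "0 < Z * exp (- \<phi> (c2 * (M + norm x0)))"
    using \<open>Z > 0\<close> by simp
  ultimately show ?thesis
    by blast
qed

lemma equivalent_norm_dist_le_in_ball:
  fixes N :: "'a::real_normed_vector \<Rightarrow> real"
  assumes "c1 > 0" "c2 > 0"
    and N_equiv: "\<forall>x. c1 * norm x \<le> N x \<and> N x \<le> c2 * norm x"
    and hx: "norm x > 4 * (c2 / c1) * norm x0"
    and hy: "norm y \<le> (c1 / (2 * c2)) * norm x"
  shows "N (y - x0) \<le> N (x - x0)"
proof -
  have x_far: "4 * c2 * norm x0 < c1 * norm x"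
    using hx \<open>c1 > 0\<close> by (simp add: field_simps)
  moreover have "0 \<le> 4 * c2 * norm x0"
    using \<open>c2 > 0\<close> by simp
  ultimately have "norm x > 0"
    by (cases "x = 0") auto
  moreover have "c1 * norm x \<le> c2 * norm x"
    using N_equiv order_trans by blast
  ultimately have "c1 \<le> c2" by simp
  have y_near: "c2 * norm y \<le> c1 * norm x / 2"
    using hy \<open>c2 > 0\<close> by (simp add: field_simps)
  have "N (y - x0) \<le> c2 * norm (y - x0)" using N_equiv by blast
  also have "\<dots> \<le> c2 * (norm y + norm x0)"
    using \<open>c2 > 0\<close> norm_triangle_ineq4[of y x0] by (intro mult_left_mono) auto
  also have "\<dots> \<le> c1 * (norm x - norm x0)"
  proof -
    have "(c1 + c2) * norm x0 \<le> 2 * c2 * norm x0"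
      using \<open>c1 \<le> c2\<close> by (intro mult_right_mono) auto
    then show ?thesis using y_near x_far by (simp add: algebra_simps)
  qed
  also have "\<dots> \<le> c1 * norm (x - x0)"
    using \<open>c1 > 0\<close> norm_triangle_ineq2[of x x0] by (intro mult_left_mono) auto
  also have "\<dots> \<le> N (x - x0)" using N_equiv by blast
  finally show ?thesis .
qed

theorem corollary1:
  fixes N :: "'a::euclidean_space \<Rightarrow> real"
    and c1 c2 :: real
    and k :: nat
    and \<eta> :: "'a \<Rightarrow> nat \<Rightarrow> real"
    and \<mu> :: "nat \<Rightarrow> real"
    and A :: "'a \<Rightarrow> real"
    and \<rho> :: "'a \<Rightarrow> real"
    and \<phi> :: "real \<Rightarrow> real"
    and x0 :: 'a
  assumes N_norm: "is_norm_fun N"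
    and c1_pos: "c1 > 0" and c2_pos: "c2 > 0"
    and N_equiv: "\<forall>x. c1 * norm x \<le> N x \<and> N x \<le> c2 * norm x"
    and \<rho>_pos: "\<forall>x. \<rho> x > 0"
    and \<rho>_prop: "\<exists>Z>0. \<forall>x. \<rho> x = Z * exp ((\<Sum>i<k. \<eta> x i * \<mu> i) - A x)"
    and \<phi>_mono: "mono_on {0..} \<phi>"
    and radial: "\<forall>x. (\<Sum>i<k. \<eta> x i * \<mu> i) - A x = - \<phi> (N (x - x0))"
  shows "(\<forall>K. compact K \<longrightarrow> (\<exists>a b. 0 < a \<and> (\<forall>x\<in>K. a \<le> \<rho> x \<and> \<rho> x \<le> b)))
       \<and> (\<forall>x. norm x > 4 * (c2 / c1) * norm x0 \<longrightarrow>
              cball 0 ((c1 / (2 * c2)) * norm x) \<subseteq> superlevel \<rho> (\<rho> x))"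
proof -
  obtain Z where "Z > 0" and \<rho>_eq: "\<And>x. \<rho> x = Z * exp (- \<phi> (N (x - x0)))"
    using \<rho>_prop radial by auto
  have N_nonneg: "\<forall>x. 0 \<le> N x"
    using N_norm unfolding is_norm_fun_def by blast
  have N_le: "\<forall>x. N x \<le> c2 * norm x"
    using N_equiv by blast
  have "\<exists>a b. 0 < a \<and> (\<forall>x\<in>K. a \<le> \<rho> x \<and> \<rho> x \<le> b)" if "compact K" for K
    unfolding \<rho>_eq
    by (rule radial_density_bounded_on_bounded[OF \<phi>_mono N_nonneg N_le less_imp_le[OF c2_pos]
          compact_imp_bounded[OF that] \<open>Z > 0\<close>])
  moreover have "cball 0 ((c1 / (2 * c2)) * norm x) \<subseteq> superlevel \<rho> (\<rho> x)"
    if "norm x > 4 * (c2 / c1) * norm x0" for x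
  proof
    fix y :: 'a assume "y \<in> cball 0 ((c1 / (2 * c2)) * norm x)"
    then have "N (y - x0) \<le> N (x - x0)"
      using equivalent_norm_dist_le_in_ball[OF c1_pos c2_pos N_equiv that] by simp
    then show "y \<in> superlevel \<rho> (\<rho> x)"
      using exp_neg_mono_on_le[OF \<phi>_mono] N_nonneg \<open>Z > 0\<close>
      unfolding superlevel_def \<rho>_eq by simp
  qed
  ultimately show ?thesis by blast
qed

end
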